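(* Let $(w_t)_{t\in\mathbb{N}_0}$ be mutually independent $\mathbb{R}^d$-valued random vectors (not necessarily identically distributed) with $\mathsf{E}[w_t]=0$, $\mathsf{E}[w_tw_t^{\mathrm T}]=Q_t$, and $\mathsf{E}[\|w_t\|^4]\le C_4$ for all $t$, for some $C_4>0$. Let $C_1:=\sup_t\mathsf{E}[\|w_t\|]$. For $r>0$ consider the closed-loop system $$x_{t+1}=x_t-\operatorname{sat}_r(x_t)+w_t,\qquad x_0=x,\quad t\in\mathbb{N}_0.$$ Then for every $r>C_1$ and every $x\in\mathbb{R}^d$ there exists $c<\infty$ such that $\sup_{t\in\mathbb{N}_0}\mathsf{E}_x[\|x_t\|^2]\le c$.
   Context: For $r>0$, $\operatorname{sat}_r:\mathbb{R}^d\to\{y:\|y\|\le r\}$ is defined by $\operatorname{sat}_r(y)=y$ if $\|y\|\le r$ and $\operatorname{sat}_r(y)=ry/\|y\|$ otherwise. $\|\cdot\|$ is the Euclidean norm; $\mathsf{E}_x$ is expectation given $x_0=x$. *)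

theory Defs
  imports "HOL-Probability.Probability"
begin

definition sat :: "real \<Rightarrow> 'a::real_normed_vector \<Rightarrow> 'a" where
  "sat r y = (if norm y \<le> r then y else (r / norm y) *\<^sub>R y)"

fun traj :: "real \<Rightarrow> (nat \<Rightarrow> 'w \<Rightarrow> 'a::real_normed_vector) \<Rightarrow> 'a \<Rightarrow> nat \<Rightarrow> 'w \<Rightarrow> 'a" where
  "traj r w x 0 \<omega> = x"
| "traj r w x (Suc t) \<omega> = traj r w x t \<omega> - sat r (traj r w x t \<omega>) + w t \<omega>"

end

theory Submission
  imports Defs
begin

text \<open>Far from the origin the saturated feedback shrinks \<open>\<parallel>x\<^sub>t\<parallel>\<close> by \<open>r\<close>, while the noise adds on
  average at most \<open>sup\<^sub>t E\<parallel>w\<^sub>t\<parallel> < r\<close>; so outside a large ball \<open>\<parallel>x\<^sub>t\<parallel>\<close> has a negative drift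
  \<open>gap\<close>. Since \<open>w\<^sub>j\<close> is independent of the past, a binomial expansion shows that along an
  excursion outside the ball which starts at time \<open>m\<close> the quantity
  \<open>(\<parallel>x\<^sub>j\<parallel> + gap (j + 1 - m) / 2)\<^sup>4\<close> is a supermartingale: the fourth power makes the drift term
  dominate the higher moment terms, which are bounded by the fourth moments of the noise.
  Splitting according to the last time \<open>s < t\<close> at which \<open>x\<^sub>s\<close> lies in the ball, and using
  \<open>a\<^sup>2 \<le> (a + b)\<^sup>4 / b\<^sup>2\<close> with \<open>b = gap (t - s) / 2\<close>, gives
  \<open>E\<parallel>x\<^sub>t\<parallel>\<^sup>2 \<le> R\<^sup>2 + \<Sum>\<^sub>k C / k\<^sup>2\<close>, uniformly in \<open>t\<close>.\<close>

lemma sat_borel_measurable [measurable]: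
  "(sat r :: 'a::euclidean_space \<Rightarrow> 'a) \<in> borel_measurable borel"
  unfolding sat_def[abs_def] by measurable

lemma traj_borel_measurable:
  fixes v :: "nat \<Rightarrow> 'w \<Rightarrow> 'a::euclidean_space"
  assumes "\<And>i. v i \<in> borel_measurable N"
  shows "traj r v x t \<in> borel_measurable N"
proof (induction t)
  case (Suc t)
  have "(\<lambda>\<omega>. sat r (traj r v x t \<omega>)) \<in> borel_measurable N"
    using measurable_compose[OF Suc sat_borel_measurable] by (simp add: comp_def)
  with Suc assms[of t] show ?case by simp
qed simp

lemma traj_cong:
  assumes "\<And>i. i < t \<Longrightarrow> w i \<omega> = v i \<omega>'"
  shows "traj r w x t \<omega> = traj r v x t \<omega>'"
  using assms by (induction t) auto

lemma norm_diff_sat: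
  assumes "r \<ge> 0"
  shows "norm (y - sat r y) = max 0 (norm y - r)"
proof (cases "norm y \<le> r")
  case False
  then have "norm y > 0" using assms by linarith
  moreover have "y - sat r y = (1 - r / norm y) *\<^sub>R y"
    using False by (simp add: sat_def algebra_simps)
  moreover have "0 \<le> 1 - r / norm y"
    using False \<open>norm y > 0\<close> by (simp add: field_simps)
  ultimately have "norm (y - sat r y) = (1 - r / norm y) * norm y"
    by simp
  also have "\<dots> = norm y - r"
    using \<open>norm y > 0\<close> by (simp add: field_simps)
  finally show ?thesis
    using False by simp
qed (simp add: sat_def)

lemma norm_traj_Suc_le:
  assumes "r \<ge> 0"
  shows "norm (traj r w x (Suc t) \<omega>) \<le> max 0 (norm (traj r w x t \<omega>) - r) + norm (w t \<omega>)"
  using norm_triangle_ineq[of "traj r w x t \<omega> - sat r (traj r w x t \<omega>)" "w t \<omega>"]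
  by (simp add: norm_diff_sat[OF assms])

lemma power4_add_le:
  fixes a b :: real
  shows "(a + b) ^ 4 \<le> 8 * (a ^ 4 + b ^ 4)"
proof -
  have "(a + b) ^ 2 \<le> 2 * (a ^ 2 + b ^ 2)"
    using sum_squares_ge_zero[of "a - b" 0] by (simp add: power2_eq_square algebra_simps)
  then have "((a + b) ^ 2) ^ 2 \<le> (2 * (a ^ 2 + b ^ 2)) ^ 2"
    by (intro power_mono) auto
  then have "(a + b) ^ 4 \<le> (2 * (a ^ 2 + b ^ 2)) ^ 2"
    by simp
  also have "\<dots> \<le> 8 * (a ^ 4 + b ^ 4)"
    using zero_le_power2[of "a ^ 2 - b ^ 2"] by (simp add: power2_eq_square power4_eq_xxxx algebra_simps)
  finally show ?thesis .
qed

lemma power_le_one_add_power: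
  fixes a :: real
  assumes "0 \<le> a" and "k \<le> n"
  shows "a ^ k \<le> 1 + a ^ n"
proof (cases "a \<le> 1")
  case True
  then show ?thesis using assms by (smt (verit) power_le_one zero_le_power)
next
  case False
  then have "a ^ k \<le> a ^ n"
    using assms by (intro power_increasing) auto
  then show ?thesis
    by simp
qed

lemma power_add_le_one_add_power4:
  fixes a c :: real
  assumes "0 \<le> a" "0 \<le> c" "k \<le> 4"
  shows "(a + c) ^ k \<le> (9 + 8 * c ^ 4) * (1 + a ^ 4)"
proof -
  have "(a + c) ^ k \<le> 1 + 8 * (a ^ 4 + c ^ 4)"
    using power_le_one_add_power[of "a + c" k 4] power4_add_le[of a c] assms by simp
  also have "\<dots> \<le> (9 + 8 * c ^ 4) * (1 + a ^ 4)"
    using assms by (simp add: algebra_simps)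
  finally show ?thesis .
qed

lemma power2_le_power4_div:
  fixes a b :: real
  assumes "0 \<le> a" "0 < b"
  shows "a ^ 2 \<le> (a + b) ^ 4 / b ^ 2"
proof -
  have "a ^ 2 * b ^ 2 \<le> (a + b) ^ 2 * (a + b) ^ 2"
    using assms by (intro mult_mono power_mono) auto
  then show ?thesis
    using assms by (simp add: field_simps flip: power_add)
qed

lemma sum_inverse_squares_le: "(\<Sum>s<t. 1 / (real (t - s)) ^ 2) \<le> 2 - 2 / (real t + 1)"
proof (induction t)
  case (Suc t)
  define u where "u = real t + 1"
  have u: "u \<ge> 1" by (simp add: u_def)
  have "u * (u + 1) \<le> u * (2 * u)"
    using u by (intro mult_left_mono) auto
  then have "1 / u ^ 2 \<le> 2 / (u * (u + 1))"
    using u by (simp add: divide_simps power2_eq_square)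
  also have "\<dots> = 2 / u - 2 / (u + 1)"
    using u by (simp add: field_simps)
  finally have "1 / u ^ 2 \<le> 2 / u - 2 / (u + 1)" .
  moreover have "(\<Sum>s<Suc t. 1 / (real (Suc t - s)) ^ 2) = 1 / u ^ 2 + (\<Sum>s<t. 1 / (real (t - s)) ^ 2)"
    by (subst sum.lessThan_Suc_shift) (simp add: u_def)
  ultimately show ?case
    using Suc by (simp add: u_def add_ac)
qed simp

lemma integrable_abs_le:
  fixes f g :: "'a \<Rightarrow> real"
  assumes "integrable N g" "f \<in> borel_measurable N" "\<And>\<omega>. \<omega> \<in> space N \<Longrightarrow> \<bar>f \<omega>\<bar> \<le> g \<omega>"
  shows "integrable N f"
  using assms by (intro Bochner_Integration.integrable_bound[of N g f] AE_I2) force+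

locale saturated_loop = prob_space M for M :: "'w measure" +
  fixes w :: "nat \<Rightarrow> 'w \<Rightarrow> 'd::euclidean_space" and C4 r :: real and x :: 'd
  assumes noise_measurable [measurable]: "\<And>t. w t \<in> borel_measurable M"
    and noise_indep: "indep_vars (\<lambda>_. borel) w UNIV"
    and integrable_noise_norm_power4: "\<And>t. integrable M (\<lambda>\<omega>. norm (w t \<omega>) ^ 4)"
    and noise_norm_power4_le: "\<And>t. (\<integral>\<omega>. norm (w t \<omega>) ^ 4 \<partial>M) \<le> C4"
    and mean_noise_norm_less: "(SUP t. \<integral>\<omega>. norm (w t \<omega>) \<partial>M) < r"
begin

abbreviation X :: "nat \<Rightarrow> 'w \<Rightarrow> real" where
  "X t \<omega> \<equiv> norm (traj r w x t \<omega>)"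

lemma traj_measurable [measurable]: "traj r w x t \<in> borel_measurable M"
  by (rule traj_borel_measurable[OF noise_measurable])

lemma C4_nonneg: "C4 \<ge> 0"
proof -
  have "0 \<le> (\<integral>\<omega>. norm (w 0 \<omega>) ^ 4 \<partial>M)"
    by (rule integral_nonneg_AE) simp
  then show ?thesis
    using noise_norm_power4_le[of 0] by linarith
qed

lemma integrable_noise_norm: "integrable M (\<lambda>\<omega>. norm (w t \<omega>))"
  by (rule integrable_abs_le[where g = "\<lambda>\<omega>. 1 + norm (w t \<omega>) ^ 4"])
    (use integrable_noise_norm_power4[of t] power_le_one_add_power[OF norm_ge_zero, of 1 4] in auto)

lemma integrable_shifted_noise_norm_power4: "integrable M (\<lambda>\<omega>. (a + norm (w t \<omega>)) ^ 4)"
  by (rule integrable_abs_le[where g = "\<lambda>\<omega>. 8 * (a ^ 4 + norm (w t \<omega>) ^ 4)"])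
    (use integrable_noise_norm_power4[of t] power4_add_le[of a] in auto)

lemma shifted_noise_norm_power4_le: "(\<integral>\<omega>. (a + norm (w t \<omega>)) ^ 4 \<partial>M) \<le> 8 * (a ^ 4 + C4)"
proof -
  have "(\<integral>\<omega>. (a + norm (w t \<omega>)) ^ 4 \<partial>M) \<le> (\<integral>\<omega>. 8 * (a ^ 4 + norm (w t \<omega>) ^ 4) \<partial>M)"
    using integrable_noise_norm_power4[of t] power4_add_le[of a]
    by (intro integral_mono integrable_shifted_noise_norm_power4) auto
  also have "\<dots> = 8 * (a ^ 4 + (\<integral>\<omega>. norm (w t \<omega>) ^ 4 \<partial>M))"
    using integrable_noise_norm_power4[of t] by (simp add: prob_space)
  finally show ?thesis
    using noise_norm_power4_le[of t] by simp
qed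

lemma noise_norm_le_sup: "(\<integral>\<omega>. norm (w t \<omega>) \<partial>M) \<le> (SUP t. \<integral>\<omega>. norm (w t \<omega>) \<partial>M)"
proof (rule cSUP_upper)
  have "(\<integral>\<omega>. norm (w t \<omega>) \<partial>M) \<le> (\<integral>\<omega>. 1 + norm (w t \<omega>) ^ 4 \<partial>M)" for t
    using integrable_noise_norm_power4[of t] power_le_one_add_power[OF norm_ge_zero, of 1 4]
    by (intro integral_mono integrable_noise_norm) auto
  moreover have "(\<integral>\<omega>. 1 + norm (w t \<omega>) ^ 4 \<partial>M) \<le> 1 + C4" for t
    using integrable_noise_norm_power4[of t] noise_norm_power4_le[of t] by (simp add: prob_space)
  ultimately show "bdd_above (range (\<lambda>t. \<integral>\<omega>. norm (w t \<omega>) \<partial>M))"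
    by (intro bdd_aboveI2[where M = "1 + C4"]) (meson order_trans)
qed simp

definition gap :: real where
  "gap = r - (SUP t. \<integral>\<omega>. norm (w t \<omega>) \<partial>M)"

lemma gap_pos: "gap > 0"
  using mean_noise_norm_less by (simp add: gap_def)

lemma gap_le_r: "gap \<le> r"
proof -
  have "0 \<le> (\<integral>\<omega>. norm (w 0 \<omega>) \<partial>M)"
    by (rule integral_nonneg_AE) simp
  then show ?thesis
    using noise_norm_le_sup[of 0] unfolding gap_def by linarith
qed

lemma r_pos: "r > 0"
  using gap_pos gap_le_r by linarith

lemma noise_norm_le: "(\<integral>\<omega>. norm (w t \<omega>) \<partial>M) \<le> r - gap"
  using noise_norm_le_sup[of t] by (simp add: gap_def)

lemma norm_traj_Suc_le_add: "X (Suc t) \<omega> \<le> X t \<omega> + norm (w t \<omega>)"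
proof -
  have "max 0 (X t \<omega> - r) \<le> X t \<omega>"
    using r_pos by simp
  then show ?thesis
    using norm_traj_Suc_le[of r w x t \<omega>] r_pos by linarith
qed

lemma norm_traj_Suc_le_diff: "X t \<omega> > r \<Longrightarrow> X (Suc t) \<omega> \<le> X t \<omega> - r + norm (w t \<omega>)"
  using norm_traj_Suc_le[of r w x t \<omega>] r_pos by (simp add: max_def)

lemma integrable_norm_traj_power4: "integrable M (\<lambda>\<omega>. X t \<omega> ^ 4)"
proof (induction t)
  case (Suc t)
  have bound: "\<bar>X (Suc t) \<omega> ^ 4\<bar> \<le> 8 * (X t \<omega> ^ 4 + norm (w t \<omega>) ^ 4)" for \<omega>
  proof -
    have "X (Suc t) \<omega> ^ 4 \<le> (X t \<omega> + norm (w t \<omega>)) ^ 4"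
      by (intro power_mono norm_traj_Suc_le_add norm_ge_zero)
    also have "\<dots> \<le> 8 * (X t \<omega> ^ 4 + norm (w t \<omega>) ^ 4)"
      by (rule power4_add_le)
    finally show ?thesis
      by simp
  qed
  show ?case
    by (rule integrable_abs_le[OF _ _ bound]) (use Suc integrable_noise_norm_power4[of t] in auto)
qed simp

lemma integrable_weighted_norm_traj_power:
  assumes [measurable]: "z \<in> borel_measurable M"
    and "\<And>\<omega>. 0 \<le> z \<omega>" "\<And>\<omega>. z \<omega> \<le> 1" "c \<ge> 0" "k \<le> 4"
  shows "integrable M (\<lambda>\<omega>. z \<omega> * (X t \<omega> + c) ^ k)"
proof (rule integrable_abs_le[where g = "\<lambda>\<omega>. (9 + 8 * c ^ 4) * (1 + X t \<omega> ^ 4)"])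
  show "integrable M (\<lambda>\<omega>. (9 + 8 * c ^ 4) * (1 + X t \<omega> ^ 4))"
    using integrable_norm_traj_power4 by simp
  fix \<omega>
  have "\<bar>z \<omega> * (X t \<omega> + c) ^ k\<bar> \<le> 1 * (X t \<omega> + c) ^ k"
    unfolding abs_mult using assms by (intro mult_mono) auto
  also have "\<dots> \<le> (9 + 8 * c ^ 4) * (1 + X t \<omega> ^ 4)"
    using power_add_le_one_add_power4[OF norm_ge_zero] assms by simp
  finally show "\<bar>z \<omega> * (X t \<omega> + c) ^ k\<bar> \<le> (9 + 8 * c ^ 4) * (1 + X t \<omega> ^ 4)" .
qed simp

lemma integrable_norm_traj_sq: "integrable M (\<lambda>\<omega>. X t \<omega> ^ 2)"
  using integrable_weighted_norm_traj_power[of "\<lambda>_. 1" 0 2 t] by simp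

text \<open>The noise before time \<open>j\<close> as a point of a product space, and the trajectory up to time \<open>j\<close>
  as a measurable function of that point; this is how independence of \<open>w j\<close> from the past
  enters.\<close>

definition past :: "nat \<Rightarrow> 'w \<Rightarrow> nat \<Rightarrow> 'd" where
  "past j \<omega> = restrict (\<lambda>i. w i \<omega>) {..<j}"

abbreviation past_space :: "nat \<Rightarrow> (nat \<Rightarrow> 'd) measure" where
  "past_space j \<equiv> PiM {..<j} (\<lambda>_. borel)"

definition traj_of_past :: "nat \<Rightarrow> nat \<Rightarrow> (nat \<Rightarrow> 'd) \<Rightarrow> 'd" where
  "traj_of_past j t f = traj r (\<lambda>i f. if i < j then f i else 0) x t f"

lemma past_measurable [measurable]: "past j \<in> measurable M (past_space j)"
  unfolding past_def by (rule measurable_restrict) simp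

lemma traj_of_past_measurable [measurable]: "traj_of_past j t \<in> borel_measurable (past_space j)"
  unfolding traj_of_past_def
proof (rule traj_borel_measurable)
  fix i
  show "(\<lambda>f. if i < j then f i else 0) \<in> borel_measurable (past_space j)"
    by (cases "i < j") auto
qed

lemma traj_eq_traj_of_past: "t \<le> j \<Longrightarrow> traj r w x t \<omega> = traj_of_past j t (past j \<omega>)"
  unfolding traj_of_past_def by (rule traj_cong) (auto simp: past_def)

lemma restrict_past: "m \<le> j \<Longrightarrow> restrict (past j \<omega>) {..<m} = past m \<omega>"
  by (auto simp: past_def fun_eq_iff)

lemma indep_var_past_noise:
  assumes "h \<in> borel_measurable (past_space j)" "g \<in> borel_measurable borel"
  shows "indep_var borel (\<lambda>\<omega>. h (past j \<omega>)) borel (\<lambda>\<omega>. g (w j \<omega>))"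
proof -
  have indep: "indep_var (past_space j) (past j) (PiM {j} (\<lambda>_. borel)) (\<lambda>\<omega>. restrict (\<lambda>i. w i \<omega>) {j})"
    unfolding past_def by (rule indep_var_restrict[OF noise_indep]) auto
  have "(\<lambda>f. g (f j)) \<in> borel_measurable (PiM {j} (\<lambda>_. borel))"
    using assms(2) by measurable
  from indep_var_compose[OF indep assms(1) this]
  have "indep_var borel (h \<circ> past j) borel ((\<lambda>f. g (f j)) \<circ> (\<lambda>\<omega>. restrict (\<lambda>i. w i \<omega>) {j}))" .
  then show ?thesis
    by (simp add: comp_def)
qed

subsection \<open>One-step drift of the fourth power\<close>

text \<open>Outside the ball of radius \<open>r\<close>, \<open>X (Suc j) + gap / 2 \<le> X j + incr j\<close>.\<close>

definition incr :: "nat \<Rightarrow> 'w \<Rightarrow> real" where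
  "incr j \<omega> = norm (w j \<omega>) - r + gap / 2"

definition moment_bound :: real where
  "moment_bound = 8 * ((1 + r) ^ 4 + C4)"

lemma incr_measurable [measurable]: "incr j \<in> borel_measurable M"
  unfolding incr_def[abs_def] by measurable

lemma abs_incr_power_le: "k \<le> 4 \<Longrightarrow> \<bar>incr j \<omega> ^ k\<bar> \<le> (1 + r + norm (w j \<omega>)) ^ 4"
proof -
  assume "k \<le> 4"
  have "\<bar>incr j \<omega>\<bar> \<le> 1 + r + norm (w j \<omega>)"
    using gap_pos gap_le_r r_pos norm_ge_zero[of "w j \<omega>"] unfolding incr_def by linarith
  then have "\<bar>incr j \<omega>\<bar> ^ k \<le> (1 + r + norm (w j \<omega>)) ^ k"
    by (intro power_mono) auto
  also have "\<dots> \<le> (1 + r + norm (w j \<omega>)) ^ 4"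
    using \<open>k \<le> 4\<close> r_pos by (intro power_increasing) auto
  finally show ?thesis
    by (simp add: power_abs)
qed

lemma integrable_incr_power: "k \<le> 4 \<Longrightarrow> integrable M (\<lambda>\<omega>. incr j \<omega> ^ k)"
  by (rule integrable_abs_le[OF integrable_shifted_noise_norm_power4]) (auto intro: abs_incr_power_le)

lemma incr_power_le: "k \<le> 4 \<Longrightarrow> (\<integral>\<omega>. incr j \<omega> ^ k \<partial>M) \<le> moment_bound"
proof -
  assume "k \<le> 4"
  have "(\<integral>\<omega>. incr j \<omega> ^ k \<partial>M) \<le> (\<integral>\<omega>. (1 + r + norm (w j \<omega>)) ^ 4 \<partial>M)"
    using abs_incr_power_le[OF \<open>k \<le> 4\<close>, of j]
    by (intro integral_mono integrable_incr_power integrable_shifted_noise_norm_power4 \<open>k \<le> 4\<close>)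
      (simp add: abs_le_iff)
  also have "\<dots> \<le> moment_bound"
    using shifted_noise_norm_power4_le[of "1 + r" j] by (simp add: moment_bound_def)
  finally show ?thesis .
qed

lemma incr_mean_le: "(\<integral>\<omega>. incr j \<omega> \<partial>M) \<le> - gap / 2"
proof -
  have "(\<integral>\<omega>. incr j \<omega> \<partial>M) = (\<integral>\<omega>. norm (w j \<omega>) \<partial>M) - r + gap / 2"
    unfolding incr_def using integrable_noise_norm[of j] by (simp add: prob_space)
  then show ?thesis
    using noise_norm_le[of j] by simp
qed

lemma moment_bound_nonneg: "moment_bound \<ge> 0"
  using C4_nonneg r_pos by (simp add: moment_bound_def)

text \<open>For \<open>W \<ge> 1\<close> the three lower-order terms of \<open>cubic_drift W\<close> add up to at most
  \<open>11 * moment_bound * W\<^sup>2\<close>; this is where the constant in \<open>radius\<close> comes from.\<close>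

definition cubic_drift :: "real \<Rightarrow> real" where
  "cubic_drift W = - 2 * gap * W ^ 3 + 6 * moment_bound * W ^ 2 + 4 * moment_bound * W + moment_bound"

definition radius :: real where
  "radius = max r (11 * moment_bound / (2 * gap) + 1)"

lemma cubic_drift_nonpos:
  assumes "W \<ge> 11 * moment_bound / (2 * gap) + 1"
  shows "cubic_drift W \<le> 0"
proof -
  have W1: "W \<ge> 1"
    using assms moment_bound_nonneg gap_pos by (smt (verit) divide_nonneg_pos)
  have "11 * moment_bound \<le> 2 * gap * W"
    using assms gap_pos by (simp add: field_simps)
  then have "11 * moment_bound * W ^ 2 \<le> 2 * gap * W * W ^ 2"
    by (intro mult_right_mono) auto
  then have "11 * moment_bound * W ^ 2 \<le> 2 * gap * W ^ 3"
    by (simp add: power2_eq_square power3_eq_cube algebra_simps)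
  moreover have "moment_bound * W \<le> moment_bound * W ^ 2"
    using W1 moment_bound_nonneg by (intro mult_left_mono) (simp_all add: power2_eq_square)
  moreover have "moment_bound \<le> moment_bound * W ^ 2"
    using mult_left_mono[OF one_le_power[OF W1, of 2] moment_bound_nonneg] by simp
  ultimately show ?thesis
    unfolding cubic_drift_def by linarith
qed

lemma
  assumes [measurable]: "z \<in> borel_measurable (past_space j)"
    and z: "\<And>f. 0 \<le> z f" "\<And>f. z f \<le> 1" and c: "c \<ge> 0" and "k \<le> 4" "l \<le> 4"
  shows integrable_weighted_mult_incr_power:
      "integrable M (\<lambda>\<omega>. z (past j \<omega>) * (X j \<omega> + c) ^ k * incr j \<omega> ^ l)"
    and integral_weighted_mult_incr_power:
      "(\<integral>\<omega>. z (past j \<omega>) * (X j \<omega> + c) ^ k * incr j \<omega> ^ l \<partial>M)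
        = (\<integral>\<omega>. z (past j \<omega>) * (X j \<omega> + c) ^ k \<partial>M) * (\<integral>\<omega>. incr j \<omega> ^ l \<partial>M)"
proof -
  define h where "h f = z f * (norm (traj_of_past j j f) + c) ^ k" for f
  define g where "g y = (norm y - r + gap / 2) ^ l" for y :: 'd
  have h_past: "h (past j \<omega>) = z (past j \<omega>) * (X j \<omega> + c) ^ k" for \<omega>
    by (simp add: h_def traj_eq_traj_of_past[of j j])
  have g_noise: "g (w j \<omega>) = incr j \<omega> ^ l" for \<omega>
    by (simp add: g_def incr_def)
  have "indep_var borel (\<lambda>\<omega>. h (past j \<omega>)) borel (\<lambda>\<omega>. g (w j \<omega>))"
    by (rule indep_var_past_noise) (simp_all add: h_def[abs_def] g_def[abs_def])
  moreover have "integrable M (\<lambda>\<omega>. h (past j \<omega>))"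
    unfolding h_past using z c \<open>k \<le> 4\<close> by (intro integrable_weighted_norm_traj_power) auto
  moreover have "integrable M (\<lambda>\<omega>. g (w j \<omega>))"
    unfolding g_noise using \<open>l \<le> 4\<close> by (rule integrable_incr_power)
  ultimately show "integrable M (\<lambda>\<omega>. z (past j \<omega>) * (X j \<omega> + c) ^ k * incr j \<omega> ^ l)"
    and "(\<integral>\<omega>. z (past j \<omega>) * (X j \<omega> + c) ^ k * incr j \<omega> ^ l \<partial>M)
        = (\<integral>\<omega>. z (past j \<omega>) * (X j \<omega> + c) ^ k \<partial>M) * (\<integral>\<omega>. incr j \<omega> ^ l \<partial>M)"
    by (simp_all add: indep_var_integrable indep_var_lebesgue_integral h_past g_noise)
qed

lemma radius_ge_r: "radius \<ge> r"
  by (simp add: radius_def)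

text \<open>Expand the fourth power binomially: independence of \<open>w j\<close> from the past factorises every
  mixed moment, the linear term contributes \<open>E (incr j) \<le> - gap / 2\<close> and the others at most
  \<open>moment_bound\<close>.\<close>

lemma
  assumes [measurable]: "z \<in> borel_measurable (past_space j)"
    and z: "\<And>f. 0 \<le> z f" "\<And>f. z f \<le> 1" and c: "c \<ge> 0"
  shows integrable_weighted_add_incr_power4:
      "integrable M (\<lambda>\<omega>. z (past j \<omega>) * (X j \<omega> + c + incr j \<omega>) ^ 4)"
    and weighted_add_incr_power4_le:
      "(\<integral>\<omega>. z (past j \<omega>) * (X j \<omega> + c + incr j \<omega>) ^ 4 \<partial>M)
        \<le> (\<integral>\<omega>. z (past j \<omega>) * (X j \<omega> + c) ^ 4 \<partial>M) + (\<integral>\<omega>. z (past j \<omega>) * cubic_drift (X j \<omega> + c) \<partial>M)"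
proof -
  define Z where "Z \<omega> = z (past j \<omega>)" for \<omega>
  define W where "W \<omega> = X j \<omega> + c" for \<omega>
  define J where "J k = (\<integral>\<omega>. Z \<omega> * W \<omega> ^ k \<partial>M)" for k :: nat
  define m where "m l = (\<integral>\<omega>. incr j \<omega> ^ l \<partial>M)" for l :: nat
  define F where "F k l \<omega> = Z \<omega> * W \<omega> ^ k * incr j \<omega> ^ l" for k l :: nat and \<omega>
  have F: "integrable M (F k l) \<and> (\<integral>\<omega>. F k l \<omega> \<partial>M) = J k * m l" if "k \<le> 4" "l \<le> 4" for k l
    using integrable_weighted_mult_incr_power[where z = z and j = j, OF assms(1) z c that]
      integral_weighted_mult_incr_power[where z = z and j = j, OF assms(1) z c that]
    unfolding F_def[abs_def] J_def m_def Z_def W_def by simp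
  have J_nonneg: "J k \<ge> 0" for k
    unfolding J_def Z_def W_def using z c by (intro integral_nonneg_AE) auto
  have expand: "Z \<omega> * (W \<omega> + incr j \<omega>) ^ 4 = F 4 0 \<omega> + 4 * F 3 1 \<omega> + 6 * F 2 2 \<omega> + 4 * F 1 3 \<omega> + F 0 4 \<omega>" for \<omega>
    by (simp add: F_def eval_nat_numeral algebra_simps)
  show "integrable M (\<lambda>\<omega>. z (past j \<omega>) * (X j \<omega> + c + incr j \<omega>) ^ 4)"
    using F[of 4 0] F[of 3 1] F[of 2 2] F[of 1 3] F[of 0 4] by (simp flip: Z_def W_def add: expand)
  have "(\<integral>\<omega>. Z \<omega> * (W \<omega> + incr j \<omega>) ^ 4 \<partial>M)
      = J 4 * m 0 + 4 * (J 3 * m 1) + 6 * (J 2 * m 2) + 4 * (J 1 * m 3) + J 0 * m 4"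
    unfolding expand using F[of 4 0] F[of 3 1] F[of 2 2] F[of 1 3] F[of 0 4] by simp
  also have "\<dots> \<le> J 4 + (- 2 * gap * J 3 + 6 * moment_bound * J 2 + 4 * moment_bound * J 1 + moment_bound * J 0)"
  proof -
    have "m 0 = 1"
      by (simp add: m_def prob_space)
    have "J 3 * m 1 \<le> J 3 * (- gap / 2)"
      using J_nonneg incr_mean_le[of j] by (intro mult_left_mono) (auto simp: m_def)
    moreover have "J k * m l \<le> J k * moment_bound" if "l \<le> 4" for k l
      using J_nonneg incr_power_le[OF that, of j] by (intro mult_left_mono) (auto simp: m_def)
    then have "J 2 * m 2 \<le> J 2 * moment_bound" "J 1 * m 3 \<le> J 1 * moment_bound"
      "J 0 * m 4 \<le> J 0 * moment_bound"
      by simp_all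
    ultimately show ?thesis
      using \<open>m 0 = 1\<close> by (simp add: algebra_simps)
  qed
  also have "\<dots> = (\<integral>\<omega>. Z \<omega> * W \<omega> ^ 4 \<partial>M) + (\<integral>\<omega>. Z \<omega> * cubic_drift (W \<omega>) \<partial>M)"
  proof -
    have ZW_int: "integrable M (\<lambda>\<omega>. Z \<omega> * W \<omega> ^ k)" if "k \<le> 4" for k
      unfolding Z_def W_def using z c that by (intro integrable_weighted_norm_traj_power) auto
    have "(\<lambda>\<omega>. Z \<omega> * cubic_drift (W \<omega>)) = (\<lambda>\<omega>. (- 2 * gap) * (Z \<omega> * W \<omega> ^ 3)
      + (6 * moment_bound) * (Z \<omega> * W \<omega> ^ 2) + (4 * moment_bound) * (Z \<omega> * W \<omega> ^ 1)
      + moment_bound * (Z \<omega> * W \<omega> ^ 0))"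
      by (simp add: cubic_drift_def fun_eq_iff algebra_simps)
    then show ?thesis
      using ZW_int[of 3] ZW_int[of 2] ZW_int[of 1] ZW_int[of 0]
      by (simp add: J_def del: power_one_right power_0)
  qed
  finally show "(\<integral>\<omega>. z (past j \<omega>) * (X j \<omega> + c + incr j \<omega>) ^ 4 \<partial>M)
      \<le> (\<integral>\<omega>. z (past j \<omega>) * (X j \<omega> + c) ^ 4 \<partial>M) + (\<integral>\<omega>. z (past j \<omega>) * cubic_drift (X j \<omega> + c) \<partial>M)"
    by (simp add: Z_def W_def)
qed

lemma weighted_lyapunov_drift:
  assumes [measurable]: "z \<in> borel_measurable (past_space j)"
    and z: "\<And>f. 0 \<le> z f" "\<And>f. z f \<le> 1" and c: "c \<ge> 0"
    and outside: "\<And>\<omega>. z (past j \<omega>) \<noteq> 0 \<Longrightarrow> X j \<omega> > radius"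
  shows "(\<integral>\<omega>. z (past j \<omega>) * (X (Suc j) \<omega> + c + gap / 2) ^ 4 \<partial>M)
    \<le> (\<integral>\<omega>. z (past j \<omega>) * (X j \<omega> + c) ^ 4 \<partial>M)"
proof -
  have step: "X (Suc j) \<omega> + c + gap / 2 \<le> X j \<omega> + c + incr j \<omega>"
    and far: "X j \<omega> + c \<ge> 11 * moment_bound / (2 * gap) + 1" if "z (past j \<omega>) \<noteq> 0" for \<omega>
  proof -
    have "X j \<omega> > radius"
      using outside that .
    then show "X (Suc j) \<omega> + c + gap / 2 \<le> X j \<omega> + c + incr j \<omega>"
      using norm_traj_Suc_le_diff[of j \<omega>] radius_ge_r unfolding incr_def by linarith
    show "X j \<omega> + c \<ge> 11 * moment_bound / (2 * gap) + 1"
      using \<open>X j \<omega> > radius\<close> c by (simp add: radius_def)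
  qed
  have pointwise_step: "z (past j \<omega>) * (X (Suc j) \<omega> + c + gap / 2) ^ 4 \<le> z (past j \<omega>) * (X j \<omega> + c + incr j \<omega>) ^ 4"
    and pointwise_cubic: "z (past j \<omega>) * cubic_drift (X j \<omega> + c) \<le> 0" for \<omega>
    using step[of \<omega>] far[of \<omega>] z gap_pos c cubic_drift_nonpos
    by (cases "z (past j \<omega>) = 0"; auto intro!: mult_left_mono power_mono simp: mult_nonneg_nonpos)+
  have "(\<integral>\<omega>. z (past j \<omega>) * (X (Suc j) \<omega> + c + gap / 2) ^ 4 \<partial>M)
      \<le> (\<integral>\<omega>. z (past j \<omega>) * (X j \<omega> + c + incr j \<omega>) ^ 4 \<partial>M)"
    using pointwise_step z by (intro integral_mono' integrable_weighted_add_incr_power4 c) auto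
  moreover have "0 \<le> (\<integral>\<omega>. - (z (past j \<omega>) * cubic_drift (X j \<omega> + c)) \<partial>M)"
    using pointwise_cubic by (intro integral_nonneg_AE) (simp add: AE_I2)
  ultimately show ?thesis
    using weighted_add_incr_power4_le[OF assms(1) z c] by simp
qed

subsection \<open>Excursions outside the ball\<close>

definition above :: "nat \<Rightarrow> nat \<Rightarrow> 'w \<Rightarrow> real" where
  "above m j \<omega> = (\<Prod>i\<in>{m..j}. if X i \<omega> > radius then 1 else 0)"

lemma above_measurable [measurable]: "above m j \<in> borel_measurable M"
  unfolding above_def[abs_def] by measurable

lemma above_nonneg: "0 \<le> above m j \<omega>"
  unfolding above_def by (auto intro: prod_nonneg)

lemma above_le_one: "above m j \<omega> \<le> 1"
  unfolding above_def by (auto intro: prod_le_1)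

lemma above_Suc:
  "m \<le> Suc j \<Longrightarrow> above m (Suc j) \<omega> = above m j \<omega> * (if X (Suc j) \<omega> > radius then 1 else 0)"
  unfolding above_def by (simp del: traj.simps)

text \<open>The Lyapunov function of an excursion outside the ball that starts at time \<open>m\<close> on an event
  \<open>g\<close> of the earlier noise; by \<open>lyap_Suc_le\<close> its expectation does not increase.\<close>

definition lyap :: "((nat \<Rightarrow> 'd) \<Rightarrow> real) \<Rightarrow> nat \<Rightarrow> nat \<Rightarrow> 'w \<Rightarrow> real" where
  "lyap g m j \<omega> = g (past m \<omega>) * above m j \<omega> * (X j \<omega> + gap * real (j + 1 - m) / 2) ^ 4"

context
  fixes g :: "(nat \<Rightarrow> 'd) \<Rightarrow> real" and m :: nat
  assumes g_measurable [measurable]: "g \<in> borel_measurable (past_space m)"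
    and g_nonneg: "\<And>f. 0 \<le> g f" and g_le_one: "\<And>f. g f \<le> 1"
begin

lemma integrable_lyap: "integrable M (lyap g m j)"
  unfolding lyap_def mult.assoc[symmetric]
  using g_nonneg g_le_one above_nonneg above_le_one gap_pos
  by (intro integrable_weighted_norm_traj_power) (auto intro: mult_le_one)

lemma lyap_Suc_le:
  assumes "m \<le> j"
  shows "(\<integral>\<omega>. lyap g m (Suc j) \<omega> \<partial>M) \<le> (\<integral>\<omega>. lyap g m j \<omega> \<partial>M)"
proof -
  define c where "c = gap * real (j + 1 - m) / 2"
  define z where "z f = g (restrict f {..<m}) * (\<Prod>i\<in>{m..j}. if norm (traj_of_past j i f) > radius then 1 else 0)"
    for f
  have "(\<lambda>f. restrict f {..<m}) \<in> measurable (past_space j) (past_space m)"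
    using assms by (intro measurable_restrict_subset) auto
  from measurable_compose[OF this g_measurable]
  have z_measurable: "z \<in> borel_measurable (past_space j)"
    unfolding z_def[abs_def] by measurable
  have z_past: "z (past j \<omega>) = g (past m \<omega>) * above m j \<omega>" for \<omega>
    using assms by (auto simp: z_def above_def restrict_past traj_eq_traj_of_past intro!: prod.cong)
  have z_nonneg: "0 \<le> z f" for f
    unfolding z_def using g_nonneg by (auto intro!: mult_nonneg_nonneg prod_nonneg)
  have z_le_one: "z f \<le> 1" for f
    unfolding z_def using g_nonneg g_le_one by (auto intro!: mult_le_one prod_le_1 prod_nonneg)
  have "X j \<omega> > radius" if "z (past j \<omega>) \<noteq> 0" for \<omega>
    using that assms by (fastforce simp: z_past above_def split: if_splits)
  from weighted_lyapunov_drift[OF z_measurable z_nonneg z_le_one _ this]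
  have drift: "(\<integral>\<omega>. z (past j \<omega>) * (X (Suc j) \<omega> + c + gap / 2) ^ 4 \<partial>M) \<le> (\<integral>\<omega>. lyap g m j \<omega> \<partial>M)"
    using gap_pos by (simp add: c_def z_past lyap_def)
  have "lyap g m (Suc j) \<omega> \<le> z (past j \<omega>) * (X (Suc j) \<omega> + c + gap / 2) ^ 4" for \<omega>
  proof -
    have e: "X (Suc j) \<omega> + gap * real (Suc j + 1 - m) / 2 = X (Suc j) \<omega> + c + gap / 2"
      using assms by (simp add: c_def of_nat_diff field_simps del: traj.simps)
    have "lyap g m (Suc j) \<omega>
        = g (past m \<omega>) * above m j \<omega> * (if X (Suc j) \<omega> > radius then 1 else 0) * (X (Suc j) \<omega> + c + gap / 2) ^ 4"
      unfolding lyap_def e using assms by (simp add: above_Suc del: traj.simps)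
    also have "\<dots> \<le> g (past m \<omega>) * above m j \<omega> * 1 * (X (Suc j) \<omega> + c + gap / 2) ^ 4"
      using g_nonneg above_nonneg by (intro mult_right_mono mult_left_mono) (auto simp del: traj.simps)
    finally show ?thesis
      by (simp add: z_past del: traj.simps)
  qed
  then have "(\<integral>\<omega>. lyap g m (Suc j) \<omega> \<partial>M) \<le> (\<integral>\<omega>. z (past j \<omega>) * (X (Suc j) \<omega> + c + gap / 2) ^ 4 \<partial>M)"
  proof (intro integral_mono integrable_lyap)
    have "integrable M (\<lambda>\<omega>. z (past j \<omega>) * (X (Suc j) \<omega> + (c + gap / 2)) ^ 4)"
      using z_measurable z_nonneg z_le_one gap_pos
      by (intro integrable_weighted_norm_traj_power) (auto simp: c_def simp del: traj.simps)
    then show "integrable M (\<lambda>\<omega>. z (past j \<omega>) * (X (Suc j) \<omega> + c + gap / 2) ^ 4)"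
      by (simp only: add.assoc)
  qed
  with drift show ?thesis
    by linarith
qed

lemma lyap_le_initial: "m \<le> j \<Longrightarrow> (\<integral>\<omega>. lyap g m j \<omega> \<partial>M) \<le> (\<integral>\<omega>. lyap g m m \<omega> \<partial>M)"
proof (induction j rule: dec_induct)
  case (step j)
  then show ?case
    using lyap_Suc_le[of j] by linarith
qed simp

end

subsection \<open>Last-exit decomposition\<close>

definition below :: "nat \<Rightarrow> (nat \<Rightarrow> 'd) \<Rightarrow> real" where
  "below s f = (if norm (traj_of_past (Suc s) s f) \<le> radius then 1 else 0)"

lemma below_measurable: "below s \<in> borel_measurable (past_space (Suc s))"
  unfolding below_def[abs_def] by measurable

lemma below_nonneg: "0 \<le> below s f"
  by (simp add: below_def)

lemma below_le_one: "below s f \<le> 1"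
  by (simp add: below_def)

lemma below_past: "below s (past (Suc s) \<omega>) = (if X s \<omega> \<le> radius then 1 else 0)"
  by (simp add: below_def traj_eq_traj_of_past[of s "Suc s"])

definition restart_bound :: real where
  "restart_bound = 8 * ((radius + r) ^ 4 + C4)"

lemma lyap_restart_le: "(\<integral>\<omega>. lyap (below s) (Suc s) (Suc s) \<omega> \<partial>M) \<le> restart_bound"
proof -
  have "lyap (below s) (Suc s) (Suc s) \<omega> \<le> (radius + r + norm (w s \<omega>)) ^ 4" for \<omega>
  proof (cases "X s \<omega> \<le> radius")
    case True
    then have "X (Suc s) \<omega> + gap / 2 \<le> radius + r + norm (w s \<omega>)"
      using norm_traj_Suc_le_add[of s \<omega>] gap_le_r gap_pos by linarith
    then have "(X (Suc s) \<omega> + gap / 2) ^ 4 \<le> (radius + r + norm (w s \<omega>)) ^ 4"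
      using gap_pos by (intro power_mono) auto
    moreover have "above (Suc s) (Suc s) \<omega> * (X (Suc s) \<omega> + gap / 2) ^ 4 \<le> (X (Suc s) \<omega> + gap / 2) ^ 4"
      by (rule mult_left_le_one_le) (simp_all add: above_nonneg above_le_one del: traj.simps)
    ultimately show ?thesis
      using True by (simp add: lyap_def below_past del: traj.simps)
  qed (simp add: lyap_def below_past)
  then have "(\<integral>\<omega>. lyap (below s) (Suc s) (Suc s) \<omega> \<partial>M) \<le> (\<integral>\<omega>. (radius + r + norm (w s \<omega>)) ^ 4 \<partial>M)"
    using below_measurable
    by (intro integral_mono integrable_lyap integrable_shifted_noise_norm_power4 below_nonneg below_le_one)
  also have "\<dots> \<le> restart_bound"
    using shifted_noise_norm_power4_le[of "radius + r" s] by (simp add: restart_bound_def)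
  finally show ?thesis .
qed

text \<open>The excursion containing time \<open>t\<close> starts right after the last time \<open>s < t\<close> with
  \<open>X s \<le> radius\<close>, or at time \<open>0\<close>.\<close>

lemma above_radius_le_last_exit:
  "(if X t \<omega> > radius then 1 else 0)
    \<le> (\<Sum>s<t. (if X s \<omega> \<le> radius then 1 else 0) * above (Suc s) t \<omega>) + above 0 t \<omega>"
proof (induction t)
  case (Suc t)
  show ?case
  proof (cases "X (Suc t) \<omega> > radius")
    case False
    then show ?thesis
      using above_nonneg by (auto intro!: add_nonneg_nonneg sum_nonneg simp del: traj.simps)
  next
    case True
    then have "above a (Suc t) \<omega> = above a t \<omega>" if "a \<le> Suc t" for a
      using above_Suc[OF that] by simp
    moreover have "above (Suc t) (Suc t) \<omega> = 1"
      using True by (simp add: above_def del: traj.simps)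
    ultimately have "(\<Sum>s<Suc t. (if X s \<omega> \<le> radius then 1 else 0) * above (Suc s) (Suc t) \<omega>) + above 0 (Suc t) \<omega>
        = (\<Sum>s<t. (if X s \<omega> \<le> radius then 1 else 0) * above (Suc s) t \<omega>) + above 0 t \<omega>
          + (if X t \<omega> \<le> radius then 1 else 0)"
      by (simp del: traj.simps)
    with Suc True show ?thesis
      by (simp del: traj.simps split: if_splits)
  qed
qed (simp add: above_def)

lemma norm_traj_sq_mult_le_lyap:
  assumes "m \<le> t" "0 \<le> g (past m \<omega>)"
  shows "X t \<omega> ^ 2 * (g (past m \<omega>) * above m t \<omega>) \<le> lyap g m t \<omega> / (gap * real (t + 1 - m) / 2) ^ 2"
proof -
  define b where "b = gap * real (t + 1 - m) / 2"
  have "b > 0"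
    using assms gap_pos by (simp add: b_def)
  then have "X t \<omega> ^ 2 \<le> (X t \<omega> + b) ^ 4 / b ^ 2"
    by (intro power2_le_power4_div) auto
  then have "X t \<omega> ^ 2 * (g (past m \<omega>) * above m t \<omega>) \<le> (X t \<omega> + b) ^ 4 / b ^ 2 * (g (past m \<omega>) * above m t \<omega>)"
    using assms above_nonneg by (intro mult_right_mono) auto
  also have "\<dots> = lyap g m t \<omega> / b ^ 2"
    by (simp add: lyap_def b_def mult_ac)
  finally show ?thesis
    by (simp add: b_def)
qed

lemma norm_traj_sq_le_lyap_sum:
  "X t \<omega> ^ 2 \<le> radius ^ 2 + (\<Sum>s<t. lyap (below s) (Suc s) t \<omega> / (gap * real (t - s) / 2) ^ 2)
    + lyap (\<lambda>_. 1) 0 t \<omega> / (gap * (real t + 1) / 2) ^ 2"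
proof -
  have sum_term: "X t \<omega> ^ 2 * (below s (past (Suc s) \<omega>) * above (Suc s) t \<omega>)
      \<le> lyap (below s) (Suc s) t \<omega> / (gap * real (t - s) / 2) ^ 2" if "s < t" for s
    using norm_traj_sq_mult_le_lyap[of "Suc s" t "below s" \<omega>] that by (simp add: below_nonneg)
  have initial_term: "X t \<omega> ^ 2 * ((\<lambda>_. 1) (past 0 \<omega>) * above 0 t \<omega>)
      \<le> lyap (\<lambda>_. 1) 0 t \<omega> / (gap * (real t + 1) / 2) ^ 2"
    using norm_traj_sq_mult_le_lyap[of 0 t "\<lambda>_. 1" \<omega>] by (simp add: add.commute)
  have "X t \<omega> ^ 2 \<le> radius ^ 2 + X t \<omega> ^ 2 * (if X t \<omega> > radius then 1 else 0)"
    using radius_ge_r r_pos by (auto intro: power_mono)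
  also have "\<dots> \<le> radius ^ 2 + X t \<omega> ^ 2
      * ((\<Sum>s<t. (if X s \<omega> \<le> radius then 1 else 0) * above (Suc s) t \<omega>) + above 0 t \<omega>)"
    by (intro add_left_mono mult_left_mono above_radius_le_last_exit) simp
  also have "\<dots> = radius ^ 2 + (\<Sum>s<t. X t \<omega> ^ 2 * (below s (past (Suc s) \<omega>) * above (Suc s) t \<omega>))
      + X t \<omega> ^ 2 * ((\<lambda>_. 1) (past 0 \<omega>) * above 0 t \<omega>)"
    by (simp add: below_past sum_distrib_left distrib_left)
  also have "\<dots> \<le> radius ^ 2 + (\<Sum>s<t. lyap (below s) (Suc s) t \<omega> / (gap * real (t - s) / 2) ^ 2)
      + lyap (\<lambda>_. 1) 0 t \<omega> / (gap * (real t + 1) / 2) ^ 2"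
    using sum_term initial_term by (intro add_mono sum_mono order_refl) auto
  finally show ?thesis .
qed

lemma lyap_initial_le: "(\<integral>\<omega>. lyap (\<lambda>_. 1) 0 t \<omega> \<partial>M) \<le> (norm x + gap / 2) ^ 4"
proof -
  have "(\<integral>\<omega>. lyap (\<lambda>_. 1) 0 t \<omega> \<partial>M) \<le> (\<integral>\<omega>. lyap (\<lambda>_. 1) 0 0 \<omega> \<partial>M)"
    by (intro lyap_le_initial) auto
  also have "\<dots> \<le> (\<integral>\<omega>. (norm x + gap / 2) ^ 4 \<partial>M)"
    using gap_pos
    by (intro integral_mono integrable_lyap) (auto simp: lyap_def intro!: mult_left_le_one_le above_nonneg above_le_one)
  finally show ?thesis
    by (simp add: prob_space)
qed

lemma second_moment_le:
  "(\<integral>\<omega>. X t \<omega> ^ 2 \<partial>M) \<le> radius ^ 2 + 8 * restart_bound / gap ^ 2 + 4 * (norm x + gap / 2) ^ 4 / gap ^ 2"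
proof -
  have lyap_below_int: "integrable M (lyap (below s) (Suc s) t)" for s
    by (intro integrable_lyap below_measurable below_nonneg below_le_one)
  have lyap_one_int: "integrable M (lyap (\<lambda>_. 1) 0 t)"
    by (intro integrable_lyap) auto
  have "(\<integral>\<omega>. X t \<omega> ^ 2 \<partial>M) \<le> (\<integral>\<omega>. radius ^ 2 + (\<Sum>s<t. lyap (below s) (Suc s) t \<omega> / (gap * real (t - s) / 2) ^ 2)
      + lyap (\<lambda>_. 1) 0 t \<omega> / (gap * (real t + 1) / 2) ^ 2 \<partial>M)"
    using lyap_below_int lyap_one_int
    by (intro integral_mono norm_traj_sq_le_lyap_sum integrable_norm_traj_sq) auto
  also have "\<dots> = radius ^ 2 + (\<Sum>s<t. (\<integral>\<omega>. lyap (below s) (Suc s) t \<omega> \<partial>M) / (gap * real (t - s) / 2) ^ 2)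
      + (\<integral>\<omega>. lyap (\<lambda>_. 1) 0 t \<omega> \<partial>M) / (gap * (real t + 1) / 2) ^ 2"
    using lyap_below_int lyap_one_int by (simp add: prob_space Bochner_Integration.integral_sum integrable_sum)
  also have "\<dots> \<le> radius ^ 2 + (\<Sum>s<t. restart_bound / (gap * real (t - s) / 2) ^ 2) + (norm x + gap / 2) ^ 4 / (gap / 2) ^ 2"
  proof (intro add_mono sum_mono order_refl divide_right_mono)
    show "(\<integral>\<omega>. lyap (below s) (Suc s) t \<omega> \<partial>M) \<le> restart_bound" if "s \<in> {..<t}" for s
      using that lyap_le_initial[OF below_measurable below_nonneg below_le_one, of s t] lyap_restart_le[of s]
      by simp
    show "(\<integral>\<omega>. lyap (\<lambda>_. 1) 0 t \<omega> \<partial>M) / (gap * (real t + 1) / 2) ^ 2 \<le> (norm x + gap / 2) ^ 4 / (gap / 2) ^ 2"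
      using lyap_initial_le gap_pos
      by (intro frac_le) (auto intro!: integral_nonneg_AE simp: lyap_def above_nonneg)
  qed auto
  also have "(\<Sum>s<t. restart_bound / (gap * real (t - s) / 2) ^ 2) = 4 * restart_bound / gap ^ 2 * (\<Sum>s<t. 1 / real (t - s) ^ 2)"
    unfolding sum_distrib_left by (rule sum.cong) (simp_all add: power_divide power_mult_distrib)
  also have "\<dots> \<le> 4 * restart_bound / gap ^ 2 * 2"
    using sum_inverse_squares_le[of t] C4_nonneg gap_pos r_pos radius_ge_r
    by (intro mult_left_mono) (auto simp: restart_bound_def intro: order_trans)
  finally show ?thesis
    by (simp add: power_divide mult.commute)
qed

lemma nn_integral_norm_traj_sq_le:
  "(\<integral>\<^sup>+\<omega>. ennreal (X t \<omega> ^ 2) \<partial>M)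
    \<le> ennreal (radius ^ 2 + 8 * restart_bound / gap ^ 2 + 4 * (norm x + gap / 2) ^ 4 / gap ^ 2)"
  using nn_integral_eq_integral[OF integrable_norm_traj_sq] second_moment_le[of t]
  by (simp add: ennreal_leI)

end

theorem proposition2:
  fixes M :: "'w measure" and w :: "nat \<Rightarrow> 'w \<Rightarrow> 'd::euclidean_space"
    and C4 r :: real
  assumes "prob_space M"
    and meas: "\<And>t. w t \<in> borel_measurable M"
    and indep: "prob_space.indep_vars M (\<lambda>_. borel) w UNIV"
    and mean0: "\<And>t. integrable M (w t) \<and> integral\<^sup>L M (w t) = 0"
    and C4pos: "C4 > 0"
    and fourth: "\<And>t. integrable M (\<lambda>\<omega>. norm (w t \<omega>) ^ 4) \<and>
                       integral\<^sup>L M (\<lambda>\<omega>. norm (w t \<omega>) ^ 4) \<le> C4"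
    and r: "r > (SUP t. integral\<^sup>L M (\<lambda>\<omega>. norm (w t \<omega>)))"
  shows "\<forall>x::'d. \<exists>c::real. \<forall>t.
           (\<integral>\<^sup>+ \<omega>. ennreal (norm (traj r w x t \<omega>) ^ 2) \<partial>M) \<le> ennreal c"
proof
  fix x :: 'd
  interpret saturated_loop M w C4 r x
    by (intro saturated_loop.intro saturated_loop_axioms.intro assms(1)) (simp_all add: meas indep fourth r)
  show "\<exists>c. \<forall>t. (\<integral>\<^sup>+ \<omega>. ennreal (norm (traj r w x t \<omega>) ^ 2) \<partial>M) \<le> ennreal c"
    using nn_integral_norm_traj_sq_le by blast
qed

end
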